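(* For all $u\in R(F,H)$ and $x\in R(E)$, \[ x\bullet u^\eta=[x,u]^\eta, \] where $[x,u]=xu-ux$.
   Context: Let $f\in\mathbb{C}[H]$ be a polynomial. $R=R(f)$ is the associative $\mathbb{C}$-algebra generated by $E,F,H$ with relations $EF-FE=f(H)$, $HE-EH=E$, $HF-FH=-F$; the monomials $F^iH^jE^k$ form a basis of $R$. Let $R(E)=\mathbb{C}[E]$ and $R(F,H)$ the subalgebra generated by $F,H$. Fix an algebra homomorphism $\eta:R(E)\to\mathbb{C}$ with $\eta(E)\neq0$ and let $R_\eta(E)=\ker\eta$. Then $R=R(F,H)\oplus R\,R_\eta(E)$ as vector spaces; for $u\in R$, $u^\eta$ denotes its $R(F,H)$-component. The $\eta$-reduced action of $R(E)$ on $R(F,H)$ is $x\bullet v=(xv)^\eta-\eta(x)v$ for $x\in R(E)$, $v\in R(F,H)$. *)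

theory Defs
  imports "HOL-Computational_Algebra.Polynomial"
begin

text \<open>A complex algebra is modelled as a ring 'a together with a unital ring
homomorphism c from the complex numbers into the centre of 'a; scalar
multiplication by z is left multiplication by c z.\<close>

definition polyR :: "(complex \<Rightarrow> 'a::ring_1) \<Rightarrow> complex poly \<Rightarrow> 'a \<Rightarrow> 'a" where
  "polyR c p x = (\<Sum>i\<le>degree p. c (coeff p i) * x ^ i)"

definition monoFHE :: "'a::ring_1 \<Rightarrow> 'a \<Rightarrow> 'a \<Rightarrow> nat \<times> nat \<times> nat \<Rightarrow> 'a" where
  "monoFHE F H E m = (case m of (i, j, k) \<Rightarrow> F ^ i * H ^ j * E ^ k)"

definition R_alg :: "(complex \<Rightarrow> 'a::ring_1) \<Rightarrow> complex poly \<Rightarrow> 'a \<Rightarrow> 'a \<Rightarrow> 'a \<Rightarrow> bool" where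
  "R_alg c f E F H \<longleftrightarrow>
     c 1 = 1 \<and> (\<forall>a b. c (a + b) = c a + c b) \<and> (\<forall>a b. c (a * b) = c a * c b) \<and>
     (\<forall>a x. c a * x = x * c a) \<and>
     E * F - F * E = polyR c f H \<and> H * E - E * H = E \<and> H * F - F * H = - F \<and>
     (\<forall>r. \<exists>!a :: nat \<times> nat \<times> nat \<Rightarrow> complex. finite {m. a m \<noteq> 0} \<and>
            r = (\<Sum>m\<in>{m. a m \<noteq> 0}. c (a m) * monoFHE F H E m))"

inductive_set subalg :: "(complex \<Rightarrow> 'a::ring_1) \<Rightarrow> 'a set \<Rightarrow> 'a set"
  for c :: "complex \<Rightarrow> 'a" and G :: "'a set" where
  scal: "c a \<in> subalg c G"
| gen: "g \<in> G \<Longrightarrow> g \<in> subalg c G"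
| add: "x \<in> subalg c G \<Longrightarrow> y \<in> subalg c G \<Longrightarrow> x + y \<in> subalg c G"
| mult: "x \<in> subalg c G \<Longrightarrow> y \<in> subalg c G \<Longrightarrow> x * y \<in> subalg c G"

inductive_set left_ideal :: "'a::ring_1 set \<Rightarrow> 'a set" for Y :: "'a set" where
  zero: "0 \<in> left_ideal Y"
| prod: "y \<in> Y \<Longrightarrow> r * y \<in> left_ideal Y"
| add: "x \<in> left_ideal Y \<Longrightarrow> z \<in> left_ideal Y \<Longrightarrow> x + z \<in> left_ideal Y"

definition alg_hom_on :: "(complex \<Rightarrow> 'a::ring_1) \<Rightarrow> 'a set \<Rightarrow> ('a \<Rightarrow> complex) \<Rightarrow> bool" where
  "alg_hom_on c S eta \<longleftrightarrow> (\<forall>a. eta (c a) = a) \<and>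
     (\<forall>x\<in>S. \<forall>y\<in>S. eta (x + y) = eta x + eta y \<and> eta (x * y) = eta x * eta y)"

definition ker_eta :: "(complex \<Rightarrow> 'a::ring_1) \<Rightarrow> 'a \<Rightarrow> ('a \<Rightarrow> complex) \<Rightarrow> 'a set" where
  "ker_eta c E eta = {x \<in> subalg c {E}. eta x = 0}"

text \<open>u^eta: the R(F,H)-component of u w.r.t. R = R(F,H) + R R_eta(E).\<close>
definition eta_proj :: "(complex \<Rightarrow> 'a::ring_1) \<Rightarrow> 'a \<Rightarrow> 'a \<Rightarrow> 'a \<Rightarrow> ('a \<Rightarrow> complex) \<Rightarrow> 'a \<Rightarrow> 'a" where
  "eta_proj c E F H eta u =
     (THE v. v \<in> subalg c {F, H} \<and> u - v \<in> left_ideal (ker_eta c E eta))"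

definition eta_act :: "(complex \<Rightarrow> 'a::ring_1) \<Rightarrow> 'a \<Rightarrow> 'a \<Rightarrow> 'a \<Rightarrow> ('a \<Rightarrow> complex) \<Rightarrow> 'a \<Rightarrow> 'a \<Rightarrow> 'a" where
  "eta_act c E F H eta x v = eta_proj c E F H eta (x * v) - c (eta x) * v"

end

theory Submission
  imports Defs
begin

text \<open>The projection u \<mapsto> u^eta is the linear map sending the basis monomial
F^i H^j E^k to eta(E)^k F^i H^j. Right multiplication by y \<in> R(E) multiplies it by
eta(y), so it vanishes on R R_eta(E); and, because H F^i = F^i H - i F^i, it commutes
with left multiplication by F and H, so it fixes R(F,H). Hence (u x)^eta = eta(x) u for
u \<in> R(F,H), and [x,u]^eta = (x u)^eta - eta(x) u = x \<bullet> u^eta.\<close>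

lemma H_mult_F_power:
  fixes F H :: "'a::ring_1"
  assumes "H * F - F * H = - F"
  shows "H * F ^ k = F ^ k * H - of_nat k * F ^ k"
proof (induction k)
  case 0
  then show ?case by simp
next
  case (Suc k)
  have HF: "H * F = F * H - F"
    using assms by (simp add: algebra_simps)
  have "H * F ^ Suc k = (F * H - F) * F ^ k"
    by (simp add: HF[symmetric] mult.assoc)
  also have "\<dots> = F * (F ^ k * H - of_nat k * F ^ k) - F * F ^ k"
    by (simp add: Suc.IH left_diff_distrib mult.assoc)
  also have "\<dots> = F ^ Suc k * H - (of_nat k * F ^ Suc k + F ^ Suc k)"
    using mult_of_nat_commute[of k F]
    by (simp add: right_diff_distrib flip: mult.assoc)
  also have "\<dots> = F ^ Suc k * H - of_nat (Suc k) * F ^ Suc k"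
    by (simp add: distrib_right)
  finally show ?case .
qed

locale complex_algebra =
  fixes c :: "complex \<Rightarrow> 'a::ring_1"
  assumes c_one: "c 1 = 1"
    and c_add: "c (a + b) = c a + c b"
    and c_mult: "c (a * b) = c a * c b"
    and c_commute: "c a * x = x * c a"
begin

lemma c_zero: "c 0 = 0"
  using c_add[of 0 0] by simp

lemma c_minus: "c (- a) = - c a"
  using c_add[of a "- a"] by (simp add: c_zero eq_neg_iff_add_eq_0 add.commute)

lemma c_of_nat: "c (of_nat n) = of_nat n"
  by (induction n) (simp_all add: c_zero c_add c_one)

lemma mult_c_left_commute: "x * (c a * y) = c a * (x * y)"
  by (metis c_commute mult.assoc)

lemma subalg_zero: "0 \<in> subalg c G"
  using subalg.scal[of c 0 G] by (simp add: c_zero)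

lemma subalg_one: "1 \<in> subalg c G"
  using subalg.scal[of c 1 G] by (simp add: c_one)

lemma subalg_scale: "x \<in> subalg c G \<Longrightarrow> c a * x \<in> subalg c G"
  by (rule subalg.mult[OF subalg.scal])

lemma subalg_power: "x \<in> subalg c G \<Longrightarrow> x ^ n \<in> subalg c G"
  by (induction n) (simp_all add: subalg_one subalg.mult)

lemma left_ideal_mult_left: "l \<in> left_ideal Y \<Longrightarrow> r * l \<in> left_ideal Y"
proof (induction rule: left_ideal.induct)
  case zero
  then show ?case by (simp add: left_ideal.zero)
next
  case (prod y s)
  then show ?case by (metis left_ideal.prod mult.assoc)
next
  case (add x z)
  then show ?case by (simp add: distrib_left left_ideal.add)
qed

definition lincomb :: "('b \<Rightarrow> 'a) \<Rightarrow> ('b \<Rightarrow> complex) \<Rightarrow> 'a" where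
  "lincomb g a = (\<Sum>m\<in>{m. a m \<noteq> 0}. c (a m) * g m)"

lemma lincomb_eq_sum:
  assumes "finite A" "{m. a m \<noteq> 0} \<subseteq> A"
  shows "lincomb g a = (\<Sum>m\<in>A. c (a m) * g m)"
  unfolding lincomb_def by (rule sum.mono_neutral_left) (use assms c_zero in auto)

lemma lincomb_add:
  assumes "finite {m. a m \<noteq> 0}" "finite {m. b m \<noteq> 0}"
  shows "lincomb g (\<lambda>m. a m + b m) = lincomb g a + lincomb g b"
proof -
  let ?A = "{m. a m \<noteq> 0} \<union> {m. b m \<noteq> 0}"
  have "finite ?A" using assms by simp
  then show ?thesis
    by (subst (1 2 3) lincomb_eq_sum[where A = ?A])
       (auto simp: c_add distrib_right sum.distrib)
qed

lemma lincomb_scale: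
  assumes "finite {m. a m \<noteq> 0}"
  shows "lincomb g (\<lambda>m. z * a m) = c z * lincomb g a"
  using assms
  by (subst (1 2) lincomb_eq_sum[where A = "{m. a m \<noteq> 0}"])
     (auto simp: c_mult sum_distrib_left mult.assoc)

end

locale eta_reduction = complex_algebra c
  for c :: "complex \<Rightarrow> 'a::ring_1" +
  fixes f :: "complex poly" and E F H :: 'a and eta :: "'a \<Rightarrow> complex"
  assumes R: "R_alg c f E F H"
    and eta_hom: "alg_hom_on c (subalg c {E}) eta"
begin

abbreviation B :: "nat \<times> nat \<times> nat \<Rightarrow> 'a" where
  "B \<equiv> monoFHE F H E"

abbreviation L :: "'a set" where
  "L \<equiv> left_ideal (ker_eta c E eta)"

lemma H_mult_F: "H * F - F * H = - F"
  using R by (simp add: R_alg_def)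

lemma eta_scalar: "eta (c a) = a"
  using eta_hom by (simp add: alg_hom_on_def)

lemma eta_add: "x \<in> subalg c {E} \<Longrightarrow> y \<in> subalg c {E} \<Longrightarrow> eta (x + y) = eta x + eta y"
  using eta_hom by (simp add: alg_hom_on_def)

lemma eta_mult: "x \<in> subalg c {E} \<Longrightarrow> y \<in> subalg c {E} \<Longrightarrow> eta (x * y) = eta x * eta y"
  using eta_hom by (simp add: alg_hom_on_def)

lemma eta_E_power: "eta (E ^ k) = eta E ^ k"
proof (induction k)
  case 0
  show ?case using eta_scalar[of 1] by (simp add: c_one)
next
  case (Suc k)
  then show ?case by (simp add: eta_mult subalg.gen subalg_power)
qed

lemma diff_eta_in_ker:
  assumes "x \<in> subalg c {E}"
  shows "x - c (eta x) \<in> ker_eta c E eta"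
proof -
  have "x - c (eta x) = x + c (- eta x)"
    by (simp add: c_minus)
  moreover have "x + c (- eta x) \<in> subalg c {E}"
    using assms by (simp add: subalg.add subalg.scal)
  moreover have "eta (x + c (- eta x)) = 0"
    using assms by (simp add: eta_add subalg.scal eta_scalar)
  ultimately show ?thesis
    unfolding ker_eta_def by (metis (mono_tags, lifting) mem_Collect_eq)
qed

lemma basis_unique: "\<exists>!a. finite {m. a m \<noteq> 0} \<and> r = lincomb B a"
  using R unfolding R_alg_def lincomb_def by (elim conjE) (rule spec)

definition coords :: "'a \<Rightarrow> nat \<times> nat \<times> nat \<Rightarrow> complex" where
  "coords r = (THE a. finite {m. a m \<noteq> 0} \<and> r = lincomb B a)"

lemma finite_coords: "finite {m. coords r m \<noteq> 0}"
  and lincomb_coords: "lincomb B (coords r) = r"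
  using theI'[OF basis_unique[of r]] unfolding coords_def by auto

lemma coords_lincomb: "finite {m. a m \<noteq> 0} \<Longrightarrow> coords (lincomb B a) = a"
  unfolding coords_def by (rule the1_equality[OF basis_unique]) auto

lemma coords_add: "coords (r + s) = (\<lambda>m. coords r m + coords s m)"
proof -
  have "finite {m. coords r m + coords s m \<noteq> 0}"
    by (rule finite_subset[OF _ finite_UnI[OF finite_coords[of r] finite_coords[of s]]]) auto
  from coords_lincomb[OF this] show ?thesis
    using lincomb_add[OF finite_coords finite_coords, of B r s]
    by (simp add: lincomb_coords)
qed

lemma coords_scale: "coords (c z * r) = (\<lambda>m. z * coords r m)"
proof -
  have "finite {m. z * coords r m \<noteq> 0}"
    by (rule finite_subset[OF _ finite_coords[of r]]) auto
  from coords_lincomb[OF this] show ?thesis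
    using lincomb_scale[OF finite_coords, of B z r]
    by (simp add: lincomb_coords)
qed

lemma coords_monomial: "coords (B m) = (\<lambda>n. if n = m then 1 else 0)"
proof -
  have "lincomb B (\<lambda>n. if n = m then 1 else 0) = B m"
    by (simp add: lincomb_def c_one)
  then show ?thesis
    using coords_lincomb[of "\<lambda>n. if n = m then 1 else 0"] by simp
qed

lemma monomial_induct [case_names zero monomial scale add]:
  assumes "P 0" "\<And>m. P (B m)" "\<And>a x. P x \<Longrightarrow> P (c a * x)"
    "\<And>x y. P x \<Longrightarrow> P y \<Longrightarrow> P (x + y)"
  shows "P r"
proof -
  have "P (\<Sum>m\<in>A. c (coords r m) * B m)" if "finite A" for A
    using that by (induction rule: finite_induct) (simp_all add: assms)
  from this[OF finite_coords[of r]] show ?thesis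
    using lincomb_coords[of r] by (simp add: lincomb_def)
qed

definition lin_ext :: "(nat \<times> nat \<times> nat \<Rightarrow> 'a) \<Rightarrow> 'a \<Rightarrow> 'a" where
  "lin_ext g r = lincomb g (coords r)"

lemma lin_ext_add: "lin_ext g (r + s) = lin_ext g r + lin_ext g s"
  unfolding lin_ext_def coords_add by (rule lincomb_add[OF finite_coords finite_coords])

lemma lin_ext_scale: "lin_ext g (c z * r) = c z * lin_ext g r"
  unfolding lin_ext_def coords_scale by (rule lincomb_scale[OF finite_coords])

lemma lin_ext_monomial: "lin_ext g (B m) = g m"
  by (simp add: lin_ext_def coords_monomial lincomb_def c_one)

definition proj :: "'a \<Rightarrow> 'a" where
  "proj = lin_ext (\<lambda>(i, j, k). c (eta E ^ k) * (F ^ i * H ^ j))"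

lemma proj_monomial: "proj (B (i, j, k)) = c (eta E ^ k) * (F ^ i * H ^ j)"
  by (simp add: proj_def lin_ext_monomial)

lemma proj_add: "proj (r + s) = proj r + proj s"
  by (simp add: proj_def lin_ext_add)

lemma proj_scale: "proj (c a * r) = c a * proj r"
  by (simp add: proj_def lin_ext_scale)

lemma proj_zero: "proj 0 = 0"
  using proj_add[of 0 0] by simp

lemma proj_diff: "proj (r - s) = proj r - proj s"
  using proj_add[of r "c (- 1) * s"] proj_scale[of "- 1" s] by (simp add: c_minus c_one)

lemma proj_one: "proj 1 = 1"
  using proj_monomial[of 0 0 0] by (simp add: monoFHE_def c_one)

lemma proj_mult_E: "proj (r * E) = c (eta E) * proj r"
proof (induction r rule: monomial_induct)
  case zero
  then show ?case by (simp add: proj_zero)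
next
  case (monomial m)
  obtain i j k where m: "m = (i, j, k)"
    by (cases m)
  have "B m * E = B (i, j, Suc k)"
    by (simp add: m monoFHE_def mult.assoc power_Suc2 del: power_Suc)
  then show ?case
    by (simp add: m proj_monomial c_mult mult.assoc)
next
  case (scale a x)
  then show ?case
    by (simp add: mult.assoc proj_scale mult_c_left_commute[of "c a"])
next
  case (add x y)
  then show ?case by (simp add: distrib_left distrib_right proj_add)
qed

lemma proj_mult_right:
  assumes "y \<in> subalg c {E}"
  shows "proj (r * y) = c (eta y) * proj r"
  using assms
proof (induction y arbitrary: r rule: subalg.induct)
  case (scal a)
  then show ?case by (simp add: proj_scale eta_scalar flip: c_commute[of a r])
next
  case (gen g)
  then show ?case by (simp add: proj_mult_E)
next
  case (add x y)
  then show ?case by (simp add: distrib_left distrib_right proj_add eta_add c_add)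
next
  case (mult x y)
  have "proj (r * (x * y)) = c (eta y) * (c (eta x) * proj r)"
    using mult.IH by (simp flip: mult.assoc)
  then show ?case
    using mult.hyps by (simp add: eta_mult c_mult mult.assoc mult_c_left_commute[of "c (eta y)"])
qed

lemma proj_eq_eta_on_subalg_E: "x \<in> subalg c {E} \<Longrightarrow> proj x = c (eta x)"
  using proj_mult_right[of x 1] by (simp add: proj_one)

lemma proj_left_ideal: "l \<in> L \<Longrightarrow> proj l = 0"
proof (induction rule: left_ideal.induct)
  case zero
  then show ?case by (simp add: proj_zero)
next
  case (prod y r)
  then show ?case by (simp add: ker_eta_def proj_mult_right c_zero)
next
  case (add x z)
  then show ?case by (simp add: proj_add)
qed

lemma proj_mult_left_if_monomials:
  assumes "\<And>m. proj (a * B m) = a * proj (B m)"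
  shows "proj (a * r) = a * proj r"
proof (induction r rule: monomial_induct)
  case zero
  then show ?case by (simp add: proj_zero)
next
  case (monomial m)
  then show ?case by (rule assms)
next
  case (scale b x)
  then show ?case by (simp add: mult_c_left_commute[of a] proj_scale)
next
  case (add x y)
  then show ?case by (simp add: distrib_left proj_add)
qed

lemma proj_mult_F: "proj (F * r) = F * proj r"
proof (rule proj_mult_left_if_monomials)
  fix m :: "nat \<times> nat \<times> nat"
  obtain i j k where m: "m = (i, j, k)"
    by (cases m)
  have "F * B m = B (Suc i, j, k)"
    by (simp add: m monoFHE_def mult.assoc)
  then show "proj (F * B m) = F * proj (B m)"
    by (simp add: m proj_monomial mult_c_left_commute[of F] mult.assoc)
qed

lemma proj_mult_H: "proj (H * r) = H * proj r"
proof (rule proj_mult_left_if_monomials)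
  fix m :: "nat \<times> nat \<times> nat"
  obtain i j k where m: "m = (i, j, k)"
    by (cases m)
  have HFi: "H * F ^ i = F ^ i * H - c (of_nat i) * F ^ i"
    by (simp add: H_mult_F_power[OF H_mult_F] c_of_nat)
  have "H * B m = (H * F ^ i) * H ^ j * E ^ k"
    by (simp add: m monoFHE_def mult.assoc)
  also have "\<dots> = B (i, Suc j, k) - c (of_nat i) * B (i, j, k)"
    unfolding HFi by (simp add: monoFHE_def left_diff_distrib mult.assoc)
  finally have "proj (H * B m)
      = c (eta E ^ k) * (F ^ i * H ^ Suc j) - c (of_nat i) * (c (eta E ^ k) * (F ^ i * H ^ j))"
    by (simp add: proj_diff proj_scale proj_monomial)
  also have "\<dots> = c (eta E ^ k) * ((H * F ^ i) * H ^ j)"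
    unfolding HFi
    by (simp add: left_diff_distrib right_diff_distrib mult.assoc mult_c_left_commute[of "c (eta E ^ k)"])
  also have "\<dots> = H * proj (B m)"
    by (simp add: m proj_monomial mult_c_left_commute[of H] mult.assoc)
  finally show "proj (H * B m) = H * proj (B m)" .
qed

lemma proj_mult_left:
  assumes "v \<in> subalg c {F, H}"
  shows "proj (v * r) = v * proj r"
  using assms
proof (induction v arbitrary: r rule: subalg.induct)
  case (scal a)
  then show ?case by (simp add: proj_scale)
next
  case (gen g)
  then show ?case by (auto simp: proj_mult_F proj_mult_H)
next
  case (add x y)
  then show ?case by (simp add: distrib_right proj_add)
next
  case (mult x y)
  then show ?case by (simp add: mult.assoc)
qed

lemma proj_fixes_subalg_FH: "v \<in> subalg c {F, H} \<Longrightarrow> proj v = v"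
  using proj_mult_left[of v 1] by (simp add: proj_one)

lemma proj_in_subalg_FH: "proj r \<in> subalg c {F, H}"
proof (induction r rule: monomial_induct)
  case zero
  then show ?case by (simp add: proj_zero subalg_zero)
next
  case (monomial m)
  obtain i j k where m: "m = (i, j, k)"
    by (cases m)
  then show ?case
    by (simp add: proj_monomial subalg_scale subalg.mult subalg_power subalg.gen)
next
  case (scale a x)
  then show ?case by (simp add: proj_scale subalg_scale)
next
  case (add x y)
  then show ?case by (simp add: proj_add subalg.add)
qed

lemma diff_proj_in_left_ideal: "r - proj r \<in> L"
proof (induction r rule: monomial_induct)
  case zero
  then show ?case by (simp add: proj_zero left_ideal.zero)
next
  case (monomial m)
  obtain i j k where m: "m = (i, j, k)"
    by (cases m)
  have "E ^ k \<in> subalg c {E}"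
    by (simp add: subalg_power subalg.gen)
  then have "F ^ i * H ^ j * (E ^ k - c (eta (E ^ k))) \<in> L"
    by (intro left_ideal.prod diff_eta_in_ker)
  moreover have "proj (B m) = c (eta E ^ k) * (F ^ i * H ^ j)"
    by (simp add: m proj_monomial)
  ultimately show ?case
    by (simp add: m monoFHE_def eta_E_power right_diff_distrib
        c_commute[of "eta E ^ k" "F ^ i * H ^ j"])
next
  case (scale a x)
  then show ?case
    using left_ideal_mult_left[of "x - proj x" _ "c a"]
    by (simp add: proj_scale right_diff_distrib)
next
  case (add x y)
  then show ?case
    using left_ideal.add[of "x - proj x" _ "y - proj y"]
    by (simp add: proj_add algebra_simps)
qed

lemma eta_proj_eq_proj: "eta_proj c E F H eta r = proj r"
  unfolding eta_proj_def
proof (rule the_equality)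
  show "proj r \<in> subalg c {F, H} \<and> r - proj r \<in> L"
    by (simp add: proj_in_subalg_FH diff_proj_in_left_ideal)
next
  fix v
  assume v: "v \<in> subalg c {F, H} \<and> r - v \<in> L"
  have "proj r = proj v + proj (r - v)"
    by (simp flip: proj_add)
  then show "v = proj r"
    using v by (simp add: proj_fixes_subalg_FH proj_left_ideal)
qed

end

theorem mainTheorem18:
  fixes c :: "complex \<Rightarrow> 'a::ring_1" and f :: "complex poly"
    and E F H :: 'a and eta :: "'a \<Rightarrow> complex" and u x :: 'a
  assumes "R_alg c f E F H"
    and "alg_hom_on c (subalg c {E}) eta"
    and "eta E \<noteq> 0"
    and "u \<in> subalg c {F, H}"
    and "x \<in> subalg c {E}"
  shows "eta_act c E F H eta x (eta_proj c E F H eta u)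
           = eta_proj c E F H eta (x * u - u * x)"
proof -
  have "complex_algebra c"
    using assms(1) unfolding R_alg_def complex_algebra_def by blast
  then interpret eta_reduction c f E F H eta
    using assms(1,2) by (simp add: eta_reduction_def eta_reduction_axioms_def)
  have "proj (u * x) = c (eta x) * u"
    using assms(4,5) by (simp add: proj_mult_left proj_eq_eta_on_subalg_E c_commute[of "eta x" u])
  then show ?thesis
    using assms(4)
    by (simp add: eta_act_def eta_proj_eq_proj proj_diff proj_fixes_subalg_FH)
qed

end
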